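(* For every $n\ge1$, the coordinates $(p_j,u_j)$ of the trajectory $T_n$ satisfy: (a) $p_ju_j<1$ for $0\le j\le n$; (b) $p_j\ge1$ for $0\le j\le (n-1)/2$, and $u_j\ge1$ for $(n+1)/2\le j\le n$; (c) $u_j<1$ for $0\le j\le n/2$, and $p_j<1$ for $n/2\le j\le n$.
   Context: $\Phi$ is the partial map of $\mathbb{R}^2$ defined for $p\ne0$ by $\Phi(p,u)=\bigl(p^2(u+1)-1,\ 1/p\bigr)$. For $n\ge1$, the trajectory $T_n$ is the (existing and unique) finite sequence $(p_j,u_j)$, $j=0,\dots,n$, with $(p_j,u_j)=\Phi(p_{j-1},u_{j-1})$ for $1\le j\le n$, $u_0=0$, $p_n=0$, and $p_j>0$ for $0\le j\le n-1$. *)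

theory Defs
  imports Complex_Main
begin

text \<open>The partial map Phi(p,u) = (p^2 (u+1) - 1, 1/p), meaningful for p \<noteq> 0.\<close>
definition Phi :: "real \<times> real \<Rightarrow> real \<times> real" where
  "Phi pu = (let (p, u) = pu in (p^2 * (u + 1) - 1, 1 / p))"

definition is_trajectory :: "nat \<Rightarrow> (nat \<Rightarrow> real) \<Rightarrow> (nat \<Rightarrow> real) \<Rightarrow> bool" where
  "is_trajectory n p u \<longleftrightarrow>
     u 0 = 0 \<and> p n = 0 \<and>
     (\<forall>j<n. p j > 0) \<and>
     (\<forall>j. 1 \<le> j \<and> j \<le> n \<longrightarrow> p (j - 1) \<noteq> 0 \<and> (p j, u j) = Phi (p (j - 1), u (j - 1)))"

end

theory Submission
  imports Defs
begin

text \<open>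
  Write w_j = p_j u_j. One step of Phi reads w_(j+1) = w_j + p_j - 1/p_j and p_(j+1) = w_(j+1) p_j.
  If some w_j \<ge> 1, then either p_j \<ge> 1 and both inequalities persist forwards, contradicting
  p_n = 0, or p_j < 1 and they persist backwards, contradicting w_0 = 0. Hence w < 1 and p is
  strictly decreasing. Since Phi (u_(j+1), p_(j+1)) = (u_j, p_j), the reversed sequence
  (u_(n-j), p_(n-j)) is again a trajectory, and trajectories are unique because p_j and w_j
  increase strictly with p_0. So u_(n-j) = p_j, i.e. p_(n-1-j) = 1/p_j, and comparing p_j with
  p_(n-1-j) by monotonicity locates p_j, and u_(j+1) = 1/p_j, relative to 1.
\<close>

lemma one_div_le_self_iff:
  fixes x :: "'a::linordered_field"
  assumes "0 < x"
  shows "1 / x \<le> x \<longleftrightarrow> 1 \<le> x"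
  using assms by (meson divide_le_eq_1_pos linorder_linear order.trans)

lemma self_le_one_div_iff:
  fixes x :: "'a::linordered_field"
  assumes "0 < x"
  shows "x \<le> 1 / x \<longleftrightarrow> x \<le> 1"
  using one_div_le_self_iff[of "1 / x"] assms by simp

locale trajectory =
  fixes n :: nat and p u :: "nat \<Rightarrow> real"
  assumes is_trajectory: "is_trajectory n p u"
begin

lemma u_0: "u 0 = 0"
  and p_n: "p n = 0"
  and p_pos: "j < n \<Longrightarrow> 0 < p j"
  using is_trajectory unfolding is_trajectory_def by auto

lemma Phi_step: "j < n \<Longrightarrow> (p (Suc j), u (Suc j)) = Phi (p j, u j)"
  using is_trajectory unfolding is_trajectory_def by (auto dest: spec[of _ "Suc j"])

lemma p_Suc: "j < n \<Longrightarrow> p (Suc j) = (p j)\<^sup>2 * (u j + 1) - 1"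
  and u_Suc: "j < n \<Longrightarrow> u (Suc j) = 1 / p j"
  using Phi_step by (auto simp: Phi_def)

lemma p_nonneg: "j \<le> n \<Longrightarrow> 0 \<le> p j"
  using p_pos[of j] p_n by (cases "j = n") auto

lemma pu_Suc: "j < n \<Longrightarrow> p (Suc j) * u (Suc j) = p j * u j + p j - 1 / p j"
  using p_pos[of j] by (simp add: p_Suc u_Suc field_simps power2_eq_square)

lemma p_Suc_eq_mult: "j < n \<Longrightarrow> p (Suc j) = p (Suc j) * u (Suc j) * p j"
  using p_pos[of j] by (simp add: u_Suc)

lemma pu_nonneg: "j \<le> n \<Longrightarrow> 0 \<le> p j * u j"
proof (cases j)
  case (Suc i)
  moreover assume "j \<le> n"
  ultimately show ?thesis using p_nonneg[of j] p_pos[of i] by (simp add: u_Suc)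
qed (simp add: u_0)

lemma pu_ge_1_forward:
  assumes "j \<le> k" "k \<le> n" "1 \<le> p j * u j" "1 \<le> p j"
  shows "1 \<le> p k * u k \<and> 1 \<le> p k"
  using assms
proof (induction k rule: dec_induct)
  case (step m)
  then have "1 / p m \<le> p m" and "m < n"
    using one_div_le_self_iff[OF p_pos] by auto
  then have pu: "1 \<le> p (Suc m) * u (Suc m)"
    using step pu_Suc by simp
  have "1 * 1 \<le> p (Suc m) * u (Suc m) * p m"
    using pu step by (intro mult_mono) auto
  with pu show ?case using p_Suc_eq_mult \<open>m < n\<close> by simp
qed simp

lemma pu_ge_1_backward:
  assumes "k \<le> j" "j < n" "1 \<le> p j * u j" "p j < 1"
  shows "1 \<le> p k * u k \<and> p k < 1"
  using assms
proof (induction k rule: inc_induct)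
  case (step m)
  then have "m < n" by simp
  have "p m \<le> p (Suc m) * u (Suc m) * p m"
    using step p_pos[OF \<open>m < n\<close>] by (simp add: mult_le_cancel_right1)
  then have "p m < 1"
    using step p_Suc_eq_mult[OF \<open>m < n\<close>] by linarith
  then have "\<not> 1 / p m \<le> p m"
    using one_div_le_self_iff[OF p_pos[OF \<open>m < n\<close>]] by simp
  then have "p m < 1 / p m" by simp
  then show ?case using step pu_Suc[OF \<open>m < n\<close>] \<open>p m < 1\<close> by linarith
qed simp

lemma pu_less_1: "j \<le> n \<Longrightarrow> p j * u j < 1"
proof (rule ccontr)
  assume "j \<le> n" "\<not> p j * u j < 1"
  then have pu: "1 \<le> p j * u j" by simp
  then have "j < n" using p_n \<open>j \<le> n\<close> by (cases "j = n") auto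
  show False
  proof (cases "1 \<le> p j")
    case True
    then show False using pu_ge_1_forward[OF _ _ pu True, of n] \<open>j < n\<close> p_n by simp
  next
    case False
    then show False using pu_ge_1_backward[OF _ \<open>j < n\<close> pu, of 0] u_0 by simp
  qed
qed

lemma p_Suc_less:
  assumes "j < n"
  shows "p (Suc j) < p j"
proof -
  have "p (Suc j) = p (Suc j) * u (Suc j) * p j"
    using p_Suc_eq_mult assms by simp
  also have "\<dots> < 1 * p j"
    using pu_less_1[of "Suc j"] p_pos assms by (intro mult_strict_right_mono) auto
  finally show ?thesis by simp
qed

lemma p_strict_decreasing:
  assumes "i < k" "k \<le> n"
  shows "p k < p i"
  using Suc_leI[OF \<open>i < k\<close>] \<open>k \<le> n\<close>
proof (induction k rule: dec_induct)
  case (step m)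
  then show ?case using p_Suc_less[of m] by simp
qed (simp add: p_Suc_less)

lemma p_decreasing: "i \<le> k \<Longrightarrow> k \<le> n \<Longrightarrow> p k \<le> p i"
  using p_strict_decreasing[of i k] by (cases "i = k") auto

lemma start_less_propagates:
  assumes "trajectory n p' u'" "p 0 < p' 0" "j \<le> n"
  shows "p j < p' j \<and> p j * u j \<le> p' j * u' j"
  using \<open>j \<le> n\<close>
proof (induction j)
  case 0
  then show ?case using assms(2) u_0 trajectory.u_0[OF assms(1)] by simp
next
  case (Suc m)
  interpret T': trajectory n p' u' by (fact assms(1))
  have "m < n" using Suc by simp
  have IH: "p m < p' m" "p m * u m \<le> p' m * u' m" using Suc by auto
  have "1 / p' m < 1 / p m"
    using p_pos[OF \<open>m < n\<close>] IH(1) by (intro divide_strict_left_mono) auto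
  then have pu_less: "p (Suc m) * u (Suc m) < p' (Suc m) * u' (Suc m)"
    using pu_Suc[OF \<open>m < n\<close>] T'.pu_Suc[OF \<open>m < n\<close>] IH by linarith
  have "p (Suc m) = p (Suc m) * u (Suc m) * p m"
    using p_Suc_eq_mult \<open>m < n\<close> by simp
  also have "\<dots> \<le> p (Suc m) * u (Suc m) * p' m"
    using pu_nonneg[of "Suc m"] \<open>m < n\<close> IH(1) by (simp add: mult_left_mono)
  also have "\<dots> < p' (Suc m) * u' (Suc m) * p' m"
    using pu_less p_pos[OF \<open>m < n\<close>] IH(1) by (simp add: mult_strict_right_mono)
  also have "\<dots> = p' (Suc m)"
    using T'.p_Suc_eq_mult \<open>m < n\<close> by simp
  finally show ?case using pu_less by simp
qed

lemma unique:
  assumes "trajectory n p' u'" "j \<le> n"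
  shows "p' j = p j \<and> u' j = u j"
proof -
  interpret T': trajectory n p' u' by (fact assms(1))
  have "p' 0 = p 0"
    using start_less_propagates[OF assms(1), of n] T'.start_less_propagates[OF trajectory_axioms, of n]
      p_n T'.p_n by (metis linorder_neqE_linordered_idom order.refl less_irrefl)
  show ?thesis using \<open>j \<le> n\<close>
  proof (induction j)
    case 0
    show ?case using \<open>p' 0 = p 0\<close> u_0 T'.u_0 by simp
  next
    case (Suc m)
    then show ?case using p_Suc u_Suc T'.p_Suc T'.u_Suc by simp
  qed
qed

lemma Phi_backward_step:
  assumes "j < n"
  shows "(u j, p j) = Phi (u (Suc j), p (Suc j))"
  using p_pos[OF assms]
  by (simp add: Phi_def p_Suc[OF assms] u_Suc[OF assms] field_simps power2_eq_square)

lemma reversed: "trajectory n (\<lambda>k. u (n - k)) (\<lambda>k. p (n - k))"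
  unfolding trajectory_def is_trajectory_def
proof (intro conjI allI impI)
  show "p (n - 0) = 0" "u (n - n) = 0"
    using p_n u_0 by simp_all
next
  fix k
  assume "k < n"
  then have "n - k = Suc (n - Suc k)" "n - Suc k < n" by auto
  then show "0 < u (n - k)"
    using p_pos u_Suc by simp
next
  fix k
  assume "1 \<le> k \<and> k \<le> n"
  then have k: "n - (k - 1) = Suc (n - k)" "n - k < n" by auto
  then show "u (n - (k - 1)) \<noteq> 0"
    using p_pos[OF k(2)] u_Suc[OF k(2)] by simp
  show "(u (n - k), p (n - k)) = Phi (u (n - (k - 1)), p (n - (k - 1)))"
    using Phi_backward_step k by simp
qed

lemma p_reflect:
  assumes "j < n"
  shows "p (n - 1 - j) = 1 / p j"
proof -
  have "u (n - (n - 1 - j)) = p (n - 1 - j)"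
    using unique[OF reversed, of "n - 1 - j"] by simp
  moreover have "n - (n - 1 - j) = Suc j"
    using assms by simp
  ultimately show ?thesis
    using u_Suc[OF assms] by simp
qed

lemma p_ge_1:
  assumes "2 * j + 1 \<le> n"
  shows "1 \<le> p j"
proof -
  have "j < n" using assms by simp
  have "1 / p j \<le> p j"
    using p_decreasing[of j "n - 1 - j"] p_reflect[OF \<open>j < n\<close>] assms by simp
  then show ?thesis using one_div_le_self_iff[OF p_pos[OF \<open>j < n\<close>]] by simp
qed

lemma p_le_1:
  assumes "n \<le> 2 * j + 1" "j < n"
  shows "p j \<le> 1"
proof -
  have "p j \<le> 1 / p j"
    using p_decreasing[of "n - 1 - j" j] p_reflect[OF \<open>j < n\<close>] assms by simp
  then show ?thesis using self_le_one_div_iff[OF p_pos[OF \<open>j < n\<close>]] by simp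
qed

lemma p_gt_1:
  assumes "2 * j + 2 \<le> n"
  shows "1 < p j"
proof -
  have "j < n" using assms by simp
  have "1 / p j < p j"
    using p_strict_decreasing[of j "n - 1 - j"] p_reflect[OF \<open>j < n\<close>] assms by simp
  then show ?thesis using self_le_one_div_iff[OF p_pos[OF \<open>j < n\<close>]] by simp
qed

lemma p_less_1:
  assumes "n \<le> 2 * j" "j \<le> n"
  shows "p j < 1"
proof (cases "j = n")
  case False
  with assms have "j < n" by simp
  have "p j < 1 / p j"
    using p_strict_decreasing[of "n - 1 - j" j] p_reflect \<open>j < n\<close> assms by simp
  then show ?thesis using one_div_le_self_iff[OF p_pos[OF \<open>j < n\<close>]] by simp
qed (simp add: p_n)

lemma u_ge_1:
  assumes "n + 1 \<le> 2 * j" "j \<le> n"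
  shows "1 \<le> u j"
proof -
  obtain i where "j = Suc i" using assms by (cases j) auto
  with assms have "i < n" "p i \<le> 1" using p_le_1 by simp_all
  then show ?thesis using \<open>j = Suc i\<close> u_Suc p_pos by simp
qed

lemma u_less_1:
  assumes "2 * j \<le> n"
  shows "u j < 1"
proof (cases j)
  case (Suc i)
  with assms have "i < n" "1 < p i" using p_gt_1 by simp_all
  then show ?thesis using Suc u_Suc by simp
qed (simp add: u_0)

end

theorem lemma5:
  fixes n :: nat and p u :: "nat \<Rightarrow> real"
  assumes "n \<ge> 1" and "is_trajectory n p u"
  shows "(\<forall>j\<le>n. p j * u j < 1)
       \<and> (\<forall>j. real j \<le> (real n - 1) / 2 \<longrightarrow> p j \<ge> 1)
       \<and> (\<forall>j\<le>n. (real n + 1) / 2 \<le> real j \<longrightarrow> u j \<ge> 1)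
       \<and> (\<forall>j. real j \<le> real n / 2 \<longrightarrow> u j < 1)
       \<and> (\<forall>j\<le>n. real n / 2 \<le> real j \<longrightarrow> p j < 1)"
proof -
  interpret trajectory n p u by (fact assms(2)[folded trajectory_def])
  show ?thesis
    by (auto intro: pu_less_1 p_ge_1 u_ge_1 u_less_1 p_less_1 simp: field_simps)
qed

end
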